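(* Let $W$ be a real vector space and $w_1,w_2,w_3,w_4\in W$. For $t\in[0,1]$ put $w_1(t)=(1-t)w_1+tw_2$, $w_2(t)=(1-t)w_2+tw_3$, $w_3(t)=(1-t)w_3+tw_1$, $w_4(t)=w_4$. Then $\operatorname{rank}(w_i)_{i=1}^4\ge 3$ if and only if $\operatorname{rank}(w_i(t))_{i=1}^4\ge 3$ for all $0\le t\le 1$.
   Context: The rank of a finite sequence of vectors is the dimension of the linear subspace they span. *)

theory Defs
  imports "HOL-Analysis.Analysis"
begin

definition rank_seq :: "'a::real_vector list \<Rightarrow> nat" where
  "rank_seq ws = dim (span (set ws))"

end

theory Submission
  imports Defs
begin

text \<open>Replacing \<open>w1, w2, w3\<close> by \<open>w1(t), w2(t), w3(t)\<close> is a linear substitution with a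
  circulant matrix with determinant \<open>(1 - t)\<^sup>3 + t\<^sup>3\<close>, which is positive on \<open>[0, 1]\<close>.
  So for every such \<open>t\<close> the deformed vectors span the same subspace as the original ones,
  and the rank does not depend on \<open>t\<close>.\<close>

lemma circulant_inverse_combination:
  fixes w1 w2 w3 :: "'a::real_vector" and a b :: real
  assumes "a^3 + b^3 \<noteq> 0"
  shows "w1 = (1 / (a^3 + b^3)) *\<^sub>R
    (a\<^sup>2 *\<^sub>R (a *\<^sub>R w1 + b *\<^sub>R w2) - (a * b) *\<^sub>R (a *\<^sub>R w2 + b *\<^sub>R w3) + b\<^sup>2 *\<^sub>R (a *\<^sub>R w3 + b *\<^sub>R w1))"
proof -
  have "a\<^sup>2 *\<^sub>R (a *\<^sub>R w1 + b *\<^sub>R w2) - (a * b) *\<^sub>R (a *\<^sub>R w2 + b *\<^sub>R w3) + b\<^sup>2 *\<^sub>R (a *\<^sub>R w3 + b *\<^sub>R w1)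
      = (a^3 + b^3) *\<^sub>R w1"
    by (simp add: algebra_simps power2_eq_square power3_eq_cube)
  then show ?thesis using assms by simp
qed

lemma span_cyclic_combinations:
  fixes w1 w2 w3 :: "'a::real_vector" and a b :: real
  assumes "a^3 + b^3 \<noteq> 0"
  shows "span {a *\<^sub>R w1 + b *\<^sub>R w2, a *\<^sub>R w2 + b *\<^sub>R w3, a *\<^sub>R w3 + b *\<^sub>R w1} = span {w1, w2, w3}"
proof -
  let ?S = "span {a *\<^sub>R w1 + b *\<^sub>R w2, a *\<^sub>R w2 + b *\<^sub>R w3, a *\<^sub>R w3 + b *\<^sub>R w1}"
  have combination_in_S: "(1 / (a^3 + b^3)) *\<^sub>R (a\<^sup>2 *\<^sub>R x - (a * b) *\<^sub>R y + b\<^sup>2 *\<^sub>R z) \<in> ?S"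
    if "x \<in> ?S" "y \<in> ?S" "z \<in> ?S" for x y z
    using that by (intro span_scale span_add span_diff)
  have "w1 \<in> ?S" "w2 \<in> ?S" "w3 \<in> ?S"
    by (subst circulant_inverse_combination[OF assms], rule combination_in_S, auto intro: span_base)+
  then have originals_in_S: "{w1, w2, w3} \<subseteq> ?S" by blast
  have "w1 \<in> span {w1, w2, w3}" "w2 \<in> span {w1, w2, w3}" "w3 \<in> span {w1, w2, w3}"
    by (auto intro: span_base)
  then have combinations_in_span: "{a *\<^sub>R w1 + b *\<^sub>R w2, a *\<^sub>R w2 + b *\<^sub>R w3, a *\<^sub>R w3 + b *\<^sub>R w1} \<subseteq> span {w1, w2, w3}"
    by (auto intro!: span_add span_scale)
  show ?thesis using originals_in_S combinations_in_span by (simp add: span_eq)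
qed

lemma span_insert_cong:
  assumes "span S = span T"
  shows "span (insert x S) = span (insert x T)"
  using assms by (simp add: span_insert)

lemma cube_sum_of_convex_weights_nonzero:
  fixes t :: real
  assumes "0 \<le> t" "t \<le> 1"
  shows "(1 - t)^3 + t^3 \<noteq> 0"
proof -
  have "(1 - t)^3 \<ge> 0" "t^3 \<ge> 0" using assms by simp_all
  moreover have "(1 - t)^3 \<noteq> 0 \<or> t^3 \<noteq> 0" by auto
  ultimately show ?thesis by linarith
qed

lemma rank_seq_cyclic_deformation:
  fixes w1 w2 w3 w4 :: "'a::real_vector" and t :: real
  assumes "0 \<le> t" "t \<le> 1"
  shows "rank_seq [(1 - t) *\<^sub>R w1 + t *\<^sub>R w2, (1 - t) *\<^sub>R w2 + t *\<^sub>R w3,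
                   (1 - t) *\<^sub>R w3 + t *\<^sub>R w1, w4] = rank_seq [w1, w2, w3, w4]"
proof -
  have "span {(1 - t) *\<^sub>R w1 + t *\<^sub>R w2, (1 - t) *\<^sub>R w2 + t *\<^sub>R w3, (1 - t) *\<^sub>R w3 + t *\<^sub>R w1}
      = span {w1, w2, w3}"
    using span_cyclic_combinations cube_sum_of_convex_weights_nonzero[OF assms] by blast
  then have "span (insert w4 {(1 - t) *\<^sub>R w1 + t *\<^sub>R w2, (1 - t) *\<^sub>R w2 + t *\<^sub>R w3,
                              (1 - t) *\<^sub>R w3 + t *\<^sub>R w1})
      = span (insert w4 {w1, w2, w3})"
    by (rule span_insert_cong)
  then show ?thesis
    unfolding rank_seq_def by (simp add: insert_commute)
qed

theorem lemma2p2: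
  fixes w1 w2 w3 w4 :: "'a::real_vector"
  shows "rank_seq [w1, w2, w3, w4] \<ge> 3 \<longleftrightarrow>
    (\<forall>t::real. 0 \<le> t \<and> t \<le> 1 \<longrightarrow>
       rank_seq [(1 - t) *\<^sub>R w1 + t *\<^sub>R w2, (1 - t) *\<^sub>R w2 + t *\<^sub>R w3,
                 (1 - t) *\<^sub>R w3 + t *\<^sub>R w1, w4] \<ge> 3)"
  using rank_seq_cyclic_deformation[of _ w1 w2 w3 w4] by auto

end
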